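(* In the setting described in the context, there exists $z^*\in\arg\min_{c'\in[K]\setminus\{c^*\}} P_2(c')$ such that $P_1(z^* )=P_2(z^* )$.
   Context: Let $N_p\ge 1$ and $K\ge 2$ be integers, and write $[m]=\{1,\dots,m\}$. Let real numbers $\rho_i^c$ be given for $i\in[N_p]$ and $c\in[K]$. A vote configuration is a matrix $\tilde V=(\tilde v_i^c)\in\{0,1\}^{N_p\times K}$ with $\sum_{c=1}^K \tilde v_i^c=1$ for every $i\in[N_p]$. Its cost is $O(\tilde V)=\sum_{i=1}^{N_p}\sum_{c=1}^K \rho_i^c\,\tilde v_i^c$. Let $\mathrm{majVote}(\tilde V)$ denote the smallest index among the maximizers of $c\mapsto \sum_{i=1}^{N_p}\tilde v_i^c$. Fix a class $c^*\in[K]$. For $c'\in[K]$ define: - $P_1(c')=\min\{O(\tilde V): \tilde V \text{ a vote configuration with } \sum_{i=1}^{N_p}(\tilde v_i^{c'}-\tilde v_i^{c})\ge \mathbf 1_{c<c'}\ \forall c\in[K]\setminus\{c'\}\}$. The constraint is equivalent to $\mathrm{majVote}(\tilde V)=c'$. - $P_2(c')=\min\{O(\tilde V): \tilde V \text{ a vote configuration with } \sum_{i=1}^{N_p}(\tilde v_i^{c'}-\tilde v_i^{c^*})\ge \mathbf 1_{c^*<c'}\}$. Here $\mathbf 1_{a<b}$ equals $1$ if $a<b$ and $0$ otherwise. *)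

theory Defs
  imports Main "HOL.Real"
begin

text \<open>A vote configuration is a 0/1 matrix indexed by i in [Np], c in [K], with each row
summing to 1. We represent it as a function nat => nat => real, required to be zero outside
[Np] x [K] (so that the set of configurations is finite).\<close>

definition vote_config :: "nat \<Rightarrow> nat \<Rightarrow> (nat \<Rightarrow> nat \<Rightarrow> real) \<Rightarrow> bool" where
  "vote_config Np K V \<longleftrightarrow>
     (\<forall>i c. V i c \<in> {0, 1}) \<and>
     (\<forall>i c. (i \<notin> {1..Np} \<or> c \<notin> {1..K}) \<longrightarrow> V i c = 0) \<and>
     (\<forall>i\<in>{1..Np}. (\<Sum>c=1..K. V i c) = 1)"

definition cost :: "nat \<Rightarrow> nat \<Rightarrow> (nat \<Rightarrow> nat \<Rightarrow> real) \<Rightarrow> (nat \<Rightarrow> nat \<Rightarrow> real) \<Rightarrow> real" where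
  "cost Np K \<rho> V = (\<Sum>i=1..Np. \<Sum>c=1..K. \<rho> i c * V i c)"

definition ind_less :: "nat \<Rightarrow> nat \<Rightarrow> real" where
  "ind_less a b = (if a < b then 1 else 0)"

definition P1 :: "nat \<Rightarrow> nat \<Rightarrow> (nat \<Rightarrow> nat \<Rightarrow> real) \<Rightarrow> nat \<Rightarrow> real" where
  "P1 Np K \<rho> c' = Min (cost Np K \<rho> ` {V. vote_config Np K V \<and>
      (\<forall>c\<in>{1..K} - {c'}. (\<Sum>i=1..Np. V i c' - V i c) \<ge> ind_less c c')})"

definition P2 :: "nat \<Rightarrow> nat \<Rightarrow> (nat \<Rightarrow> nat \<Rightarrow> real) \<Rightarrow> nat \<Rightarrow> nat \<Rightarrow> real" where
  "P2 Np K \<rho> cstar c' = Min (cost Np K \<rho> ` {V. vote_config Np K V \<and>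
      (\<Sum>i=1..Np. V i c' - V i cstar) \<ge> ind_less cstar c'})"

end

theory Submission
  imports Defs
begin

text \<open>Let \<open>V\<close> be a configuration of least cost among all configurations in which some class
  \<open>c' \<noteq> c\<^sup>*\<close> beats \<open>c\<^sup>*\<close> in the sense of \<open>P\<^sub>2(c')\<close>. Its majority vote \<open>z\<close> is not \<open>c\<^sup>*\<close>,
  and \<open>V\<close> is feasible for \<open>P\<^sub>1(z)\<close>, so \<open>P\<^sub>1(z) \<le> O(V) \<le> P\<^sub>2(c')\<close> for every \<open>c' \<noteq> c\<^sup>*\<close>.
  Since the constraint of \<open>P\<^sub>1(z)\<close> implies that of \<open>P\<^sub>2(z)\<close>, also \<open>P\<^sub>2(z) \<le> P\<^sub>1(z)\<close>, hence
  \<open>P\<^sub>2(z) = P\<^sub>1(z)\<close> is the least value of \<open>P\<^sub>2\<close>.\<close>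

definition votes :: "nat \<Rightarrow> (nat \<Rightarrow> nat \<Rightarrow> real) \<Rightarrow> nat \<Rightarrow> real" where
  "votes Np V c = (\<Sum>i=1..Np. V i c)"

definition least_argmax :: "nat \<Rightarrow> (nat \<Rightarrow> real) \<Rightarrow> nat" where
  "least_argmax K s = (LEAST c. c \<in> {1..K} \<and> (\<forall>c'\<in>{1..K}. s c' \<le> s c))"

definition maj_vote :: "nat \<Rightarrow> nat \<Rightarrow> (nat \<Rightarrow> nat \<Rightarrow> real) \<Rightarrow> nat" where
  "maj_vote Np K V = least_argmax K (votes Np V)"

definition majority_configs :: "nat \<Rightarrow> nat \<Rightarrow> nat \<Rightarrow> (nat \<Rightarrow> nat \<Rightarrow> real) set" where
  "majority_configs Np K c' = {V. vote_config Np K V \<and>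
      (\<forall>c\<in>{1..K} - {c'}. (\<Sum>i=1..Np. V i c' - V i c) \<ge> ind_less c c')}"

definition beating_configs :: "nat \<Rightarrow> nat \<Rightarrow> nat \<Rightarrow> nat \<Rightarrow> (nat \<Rightarrow> nat \<Rightarrow> real) set" where
  "beating_configs Np K cstar c' = {V. vote_config Np K V \<and>
      (\<Sum>i=1..Np. V i c' - V i cstar) \<ge> ind_less cstar c'}"

definition unanimous :: "nat \<Rightarrow> nat \<Rightarrow> nat \<Rightarrow> nat \<Rightarrow> real" where
  "unanimous Np c0 i c = (if i \<in> {1..Np} \<and> c = c0 then 1 else 0)"

lemma P1_eq_Min: "P1 Np K \<rho> c' = Min (cost Np K \<rho> ` majority_configs Np K c')"
  by (simp add: P1_def majority_configs_def)

lemma P2_eq_Min: "P2 Np K \<rho> cstar c' = Min (cost Np K \<rho> ` beating_configs Np K cstar c')"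
  by (simp add: P2_def beating_configs_def)

lemma finite_vote_configs: "finite {V. vote_config Np K V}"
proof -
  let ?A = "{1..Np} \<times> {1..K}"
  let ?F = "{f :: nat \<times> nat \<Rightarrow> real. \<forall>x. (x \<in> ?A \<longrightarrow> f x \<in> {0,1}) \<and> (x \<notin> ?A \<longrightarrow> f x = 0)}"
  have "finite ?F"
    by (rule finite_set_of_finite_funs) auto
  moreover have "{V. vote_config Np K V} \<subseteq> curry ` ?F"
  proof
    fix V assume "V \<in> {V. vote_config Np K V}"
    then have "case_prod V \<in> ?F"
      by (auto simp: vote_config_def)
    moreover have "V = curry (case_prod V)"
      by simp
    ultimately show "V \<in> curry ` ?F"
      by blast
  qed
  ultimately show ?thesis
    by (meson finite_imageI finite_subset)
qed

lemma finite_majority_configs: "finite (majority_configs Np K c')"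
  by (rule finite_subset[OF _ finite_vote_configs]) (auto simp: majority_configs_def)

lemma finite_beating_configs: "finite (beating_configs Np K cstar c')"
  by (rule finite_subset[OF _ finite_vote_configs]) (auto simp: beating_configs_def)

lemma votes_Ints:
  assumes "vote_config Np K V"
  shows "votes Np V c \<in> \<int>"
proof -
  have "V i c \<in> {0, 1}" for i
    using assms by (simp add: vote_config_def)
  then have "V i c \<in> \<int>" for i
    by (metis Ints_0 Ints_1 insert_iff singletonD)
  then show ?thesis
    by (auto simp: votes_def)
qed

lemma sum_diff_eq_votes_diff: "(\<Sum>i=1..Np. V i a - V i b) = votes Np V a - votes Np V b"
  by (simp add: votes_def sum_subtractf)

lemma least_argmax_wins:
  fixes s :: "nat \<Rightarrow> real"
  assumes "K \<ge> 1" and ints: "\<And>c. c \<in> {1..K} \<Longrightarrow> s c \<in> \<int>"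
  shows "least_argmax K s \<in> {1..K}"
    and "\<And>c. c \<in> {1..K} - {least_argmax K s} \<Longrightarrow>
           s (least_argmax K s) - s c \<ge> ind_less c (least_argmax K s)"
proof -
  let ?is_argmax = "\<lambda>c. c \<in> {1..K} \<and> (\<forall>c'\<in>{1..K}. s c' \<le> s c)"
  let ?z = "least_argmax K s"
  have "Max (s ` {1..K}) \<in> s ` {1..K}"
    using assms(1) by (intro Max_in) auto
  then obtain m where "m \<in> {1..K}" and "s m = Max (s ` {1..K})"
    by (metis imageE)
  then have "?is_argmax m"
    by simp
  then have "?is_argmax ?z"
    unfolding least_argmax_def by (rule LeastI)
  then have z: "?z \<in> {1..K}" and z_max: "\<And>c'. c' \<in> {1..K} \<Longrightarrow> s c' \<le> s ?z"
    by blast+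
  then show "?z \<in> {1..K}"
    by blast
  fix c assume c: "c \<in> {1..K} - {?z}"
  show "s ?z - s c \<ge> ind_less c ?z"
  proof (cases "c < ?z")
    case True
    then have "\<not> ?is_argmax c"
      unfolding least_argmax_def by (rule not_less_Least)
    then obtain c' where "c' \<in> {1..K}" and "s c < s c'"
      using c by auto
    then have "s c < s ?z"
      using z_max by (meson order.strict_trans2)
    moreover obtain k where "s ?z - s c = of_int k"
      using Ints_diff[OF ints[OF z] ints] c by (metis DiffD1 Ints_cases)
    ultimately show ?thesis
      using True by (simp add: ind_less_def)
  next
    case False
    then show ?thesis
      using c z_max by (simp add: ind_less_def)
  qed
qed

lemma maj_vote_in_majority_configs:
  assumes "vote_config Np K V" and "K \<ge> 1"
  shows "V \<in> majority_configs Np K (maj_vote Np K V)"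
proof -
  let ?z = "maj_vote Np K V"
  have "votes Np V ?z - votes Np V c \<ge> ind_less c ?z" if "c \<in> {1..K} - {?z}" for c
    using least_argmax_wins(2)[OF assms(2), of "votes Np V"] votes_Ints[OF assms(1)] that
    unfolding maj_vote_def by blast
  then show ?thesis
    using assms(1) unfolding majority_configs_def sum_diff_eq_votes_diff by blast
qed

lemma maj_vote_in_classes:
  assumes "vote_config Np K V" and "K \<ge> 1"
  shows "maj_vote Np K V \<in> {1..K}"
  unfolding maj_vote_def using least_argmax_wins(1)[OF assms(2) votes_Ints[OF assms(1)]] .

text \<open>Adding the constraints for \<open>c\<close> beating \<open>c\<^sup>*\<close> and for \<open>c\<^sup>*\<close> winning the majority vote
  would give \<open>0 \<ge> ind_less c c\<^sup>* + ind_less c\<^sup>* c = 1\<close>.\<close>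

lemma maj_vote_ne_beaten:
  assumes "V \<in> beating_configs Np K cstar c" and "c \<in> {1..K}" and "c \<noteq> cstar"
  shows "maj_vote Np K V \<noteq> cstar"
proof
  assume cstar_wins: "maj_vote Np K V = cstar"
  have "K \<ge> 1" and "vote_config Np K V"
    using assms by (auto simp: beating_configs_def)
  then have "V \<in> majority_configs Np K cstar"
    using cstar_wins maj_vote_in_majority_configs by blast
  then have "votes Np V cstar - votes Np V c \<ge> ind_less c cstar"
    using assms(2,3) unfolding majority_configs_def sum_diff_eq_votes_diff by blast
  moreover have "votes Np V c - votes Np V cstar \<ge> ind_less cstar c"
    using assms(1) unfolding beating_configs_def sum_diff_eq_votes_diff by blast
  ultimately show False
    using assms(3) by (auto simp: ind_less_def split: if_splits)
qed

lemma majority_configs_subset_beating_configs: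
  assumes "cstar \<in> {1..K}" and "c' \<noteq> cstar"
  shows "majority_configs Np K c' \<subseteq> beating_configs Np K cstar c'"
  using assms by (auto simp: majority_configs_def beating_configs_def)

lemma unanimous_in_beating_configs:
  assumes "Np \<ge> 1" and "c0 \<in> {1..K}" and "c0 \<noteq> cstar"
  shows "unanimous Np c0 \<in> beating_configs Np K cstar c0"
  using assms
  by (auto simp: beating_configs_def vote_config_def unanimous_def ind_less_def sum.If_cases)

lemma P2_le_P1:
  assumes "cstar \<in> {1..K}" and "z \<noteq> cstar" and "majority_configs Np K z \<noteq> {}"
  shows "P2 Np K \<rho> cstar z \<le> P1 Np K \<rho> z"
  unfolding P1_eq_Min P2_eq_Min
  using assms majority_configs_subset_beating_configs[OF assms(1,2)]
  by (intro Min_antimono image_mono) (auto simp: finite_beating_configs)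

lemma cost_le_P2:
  assumes "Np \<ge> 1" and "c' \<in> {1..K}" and "c' \<noteq> cstar"
    and "\<And>W. W \<in> beating_configs Np K cstar c' \<Longrightarrow> cost Np K \<rho> V \<le> cost Np K \<rho> W"
  shows "cost Np K \<rho> V \<le> P2 Np K \<rho> cstar c'"
  unfolding P2_eq_Min
proof (rule Min.boundedI)
  show "finite (cost Np K \<rho> ` beating_configs Np K cstar c')"
    by (simp add: finite_beating_configs)
  show "cost Np K \<rho> ` beating_configs Np K cstar c' \<noteq> {}"
    using unanimous_in_beating_configs[OF assms(1-3)] by blast
qed (use assms(4) in blast)

lemma least_cost_beating_config:
  assumes "Np \<ge> 1" and "c0 \<in> {1..K} - {cstar}"
  obtains V c where "c \<in> {1..K} - {cstar}" and "V \<in> beating_configs Np K cstar c"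
    and "\<And>c' W. c' \<in> {1..K} - {cstar} \<Longrightarrow> W \<in> beating_configs Np K cstar c' \<Longrightarrow>
           cost Np K \<rho> V \<le> cost Np K \<rho> W"
proof -
  define S where "S = (\<Union>c'\<in>{1..K} - {cstar}. beating_configs Np K cstar c')"
  have "unanimous Np c0 \<in> S"
    using unanimous_in_beating_configs[OF assms(1)] assms(2) unfolding S_def by blast
  then have "S \<noteq> {}"
    by blast
  moreover have "finite S"
    by (simp add: S_def finite_beating_configs)
  ultimately obtain V where "V \<in> S" and "\<And>W. W \<in> S \<Longrightarrow> cost Np K \<rho> V \<le> cost Np K \<rho> W"
    using arg_min_if_finite(1) arg_min_least by metis
  then show ?thesis
    using that unfolding S_def by blast
qed

theorem lemma1p3:
  fixes Np K cstar :: nat and \<rho> :: "nat \<Rightarrow> nat \<Rightarrow> real"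
  assumes "Np \<ge> 1" and "K \<ge> 2" and "cstar \<in> {1..K}"
  shows "\<exists>z. z \<in> {1..K} - {cstar} \<and>
           (\<forall>c'\<in>{1..K} - {cstar}. P2 Np K \<rho> cstar z \<le> P2 Np K \<rho> cstar c') \<and>
           P1 Np K \<rho> z = P2 Np K \<rho> cstar z"
proof -
  have "(if cstar = 1 then 2 else 1) \<in> {1..K} - {cstar}"
    using assms(2) by simp
  then obtain V c where c: "c \<in> {1..K} - {cstar}" and V_beating: "V \<in> beating_configs Np K cstar c"
    and V_least: "\<And>c' W. c' \<in> {1..K} - {cstar} \<Longrightarrow> W \<in> beating_configs Np K cstar c' \<Longrightarrow>
                    cost Np K \<rho> V \<le> cost Np K \<rho> W"
    using least_cost_beating_config[OF assms(1)] by metis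
  define z where "z = maj_vote Np K V"
  have "vote_config Np K V" and "K \<ge> 1"
    using assms(2) V_beating by (auto simp: beating_configs_def)
  then have z: "z \<in> {1..K} - {cstar}" and V_majority: "V \<in> majority_configs Np K z"
    using maj_vote_in_classes maj_vote_ne_beaten maj_vote_in_majority_configs c V_beating
    unfolding z_def by blast+
  have "P2 Np K \<rho> cstar z \<le> P1 Np K \<rho> z"
    using P2_le_P1[OF assms(3)] z V_majority by blast
  moreover have P1_le_V: "P1 Np K \<rho> z \<le> cost Np K \<rho> V"
    unfolding P1_eq_Min using V_majority by (simp add: finite_majority_configs)
  moreover have V_le_P2: "cost Np K \<rho> V \<le> P2 Np K \<rho> cstar c'" if "c' \<in> {1..K} - {cstar}" for c'
    using cost_le_P2[OF assms(1)] V_least that by blast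
  ultimately have P1_eq_P2: "P1 Np K \<rho> z = P2 Np K \<rho> cstar z"
    using V_le_P2[OF z] by linarith
  show ?thesis
    using z P1_eq_P2 P1_le_V V_le_P2 by (metis order_trans)
qed

end
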